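(* Let $L$ be a finite-dimensional pure, nonnilpotent, solvable Lie algebra over $\mathbb{C}$ of breadth $2$ such that $\dim[L,L]=2$ and $\dim L^k=2$ for all integers $k\geq 2$. Then there exists an abelian subalgebra $A$ of $L$ such that $L=A\ltimes[L,L]$ (i.e. $L=A\oplus[L,L]$ as vector spaces, with $[L,L]$ an ideal).
   Context: For $x\in L$, $b(x)=\mathrm{rank}(\mathrm{ad}_x)$ and the breadth of $L$ is $b(L)=\max\{b(x)\mid x\in L\}$. $L$ is pure if it has no abelian ideal as a direct summand; equivalently $Z(L)\subseteq[L,L]$, where $Z(L)$ is the center. The lower central series is indexed by $L^0=L$, $L^1=[L,L]$, $L^k=[L,L^{k-1}]$ for $k\geq 2$. *)

theory Defs
  imports Complex_Main
begin

text \<open>The whole type is L.\<close>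

definition lie_algebra :: "(complex \<Rightarrow> 'a::ab_group_add \<Rightarrow> 'a) \<Rightarrow> ('a \<Rightarrow> 'a \<Rightarrow> 'a) \<Rightarrow> bool" where
  "lie_algebra sc br \<longleftrightarrow>
     vector_space sc \<and>
     (\<forall>x y z. br (x + y) z = br x z + br y z) \<and>
     (\<forall>x y z. br x (y + z) = br x y + br x z) \<and>
     (\<forall>c x y. br (sc c x) y = sc c (br x y)) \<and>
     (\<forall>c x y. br x (sc c y) = sc c (br x y)) \<and>
     (\<forall>x. br x x = 0) \<and>
     (\<forall>x y z. br x (br y z) + br y (br z x) + br z (br x y) = 0)"

definition finite_dim_lie :: "(complex \<Rightarrow> 'a::ab_group_add \<Rightarrow> 'a) \<Rightarrow> bool" where
  "finite_dim_lie sc \<longleftrightarrow> (\<exists>S. finite S \<and> module.span sc S = UNIV)"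

fun lcs :: "(complex \<Rightarrow> 'a::ab_group_add \<Rightarrow> 'a) \<Rightarrow> ('a \<Rightarrow> 'a \<Rightarrow> 'a) \<Rightarrow> nat \<Rightarrow> 'a set" where
  "lcs sc br 0 = UNIV"
| "lcs sc br (Suc k) = module.span sc {br x y | x y. y \<in> lcs sc br k}"

fun derived_series :: "(complex \<Rightarrow> 'a::ab_group_add \<Rightarrow> 'a) \<Rightarrow> ('a \<Rightarrow> 'a \<Rightarrow> 'a) \<Rightarrow> nat \<Rightarrow> 'a set" where
  "derived_series sc br 0 = UNIV"
| "derived_series sc br (Suc k) =
     module.span sc {br x y | x y. x \<in> derived_series sc br k \<and> y \<in> derived_series sc br k}"

definition derived_algebra :: "(complex \<Rightarrow> 'a::ab_group_add \<Rightarrow> 'a) \<Rightarrow> ('a \<Rightarrow> 'a \<Rightarrow> 'a) \<Rightarrow> 'a set" where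
  "derived_algebra sc br = module.span sc {br x y | x y. True}"

definition lie_solvable where
  "lie_solvable sc br \<longleftrightarrow> (\<exists>k. derived_series sc br k = {0})"

definition lie_nilpotent where
  "lie_nilpotent sc br \<longleftrightarrow> (\<exists>k. lcs sc br k = {0})"

definition lie_center :: "('a \<Rightarrow> 'a \<Rightarrow> 'a::zero) \<Rightarrow> 'a set" where
  "lie_center br = {z. \<forall>x. br z x = 0}"

text \<open>Pure: Z(L) contained in [L,L] (equivalent to having no abelian direct summand ideal).\<close>
definition lie_pure where
  "lie_pure sc br \<longleftrightarrow> lie_center br \<subseteq> derived_algebra sc br"

definition elem_breadth :: "(complex \<Rightarrow> 'a::ab_group_add \<Rightarrow> 'a) \<Rightarrow> ('a \<Rightarrow> 'a \<Rightarrow> 'a) \<Rightarrow> 'a \<Rightarrow> nat" where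
  "elem_breadth sc br x = vector_space.dim sc (range (br x))"

definition lie_breadth :: "(complex \<Rightarrow> 'a::ab_group_add \<Rightarrow> 'a) \<Rightarrow> ('a \<Rightarrow> 'a \<Rightarrow> 'a) \<Rightarrow> nat" where
  "lie_breadth sc br = Max (range (elem_breadth sc br))"

end

theory Submission
  imports Defs
begin

(* D is abelian: otherwise it is the two-dimensional non-abelian Lie algebra, and every derivation
   of it, in particular every ad y, maps D into the line [D,D], contradicting [L,D] = D.
   Hence the restrictions of the ad y to D commute.  If all of them were singular, the kernel line
   of one of them would be a common eigenline, and the triangular form of the ad y with respect to
   it, together with [L,D] = D and the fact that D meets the centre trivially, yields an ad x that
   is injective on D after all.  For such an x, ad x is bijective on D and its kernel A is an
   abelian complement of D: for a, b in A the element [a,b] of D is killed by the derivation ad x,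
   and every y differs from an element of D by an element of A since [x,y] lies in D = [x,D]. *)

context vector_space
begin

lemma independent_card_ge_imp_span_subset:
  assumes "finite B" "independent C" "C \<subseteq> span B" "card B \<le> card C"
  shows "span B \<subseteq> span C"
proof (rule span_minimal)
  have C_bound: "finite C" "card C \<le> card B"
    using independent_span_bound[OF assms(1-3)] by auto
  show "B \<subseteq> span C"
  proof
    fix b assume "b \<in> B"
    show "b \<in> span C"
    proof (rule ccontr)
      assume b: "b \<notin> span C"
      then have "b \<notin> C" using span_base by blast
      have "independent (insert b C)" "insert b C \<subseteq> span B"
        using b assms(2,3) \<open>b \<in> B\<close> by (auto simp: independent_insert span_base)
      then have "card (insert b C) \<le> card B"
        using independent_span_bound[OF assms(1)] by blast
      then show False using C_bound assms(4) \<open>b \<notin> C\<close> by simp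
    qed
  qed
qed simp

lemma linear_inj_on_imp_image_span_eq:
  assumes "Vector_Spaces.linear scale scale f" and "finite B"
    and into: "f ` span B \<subseteq> span B" and inj: "inj_on f (span B)"
  shows "f ` span B = span B"
proof
  interpret f: Vector_Spaces.linear scale scale f by fact
  obtain C where C: "C \<subseteq> B" "independent C" "B \<subseteq> span C"
    by (rule maximal_independent_subset)
  have span_C: "span C = span B"
    using span_mono[OF C(1)] span_minimal[OF C(3) subspace_span] by (rule subset_antisym)
  have "finite C" using C(1) \<open>finite B\<close> by (rule finite_subset)
  have C_span: "C \<subseteq> span B" using C(1) span_superset by (rule subset_trans)
  have "independent (f ` C)"
    using f.independent_injective_image[OF C(2)] inj span_C by simp
  moreover have "f ` C \<subseteq> span C"
    using image_mono[OF C_span, of f] into span_C by simp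
  moreover have "card C \<le> card (f ` C)"
    using card_image[OF inj_on_subset[OF inj C_span]] by simp
  ultimately have "span C \<subseteq> span (f ` C)"
    by (rule independent_card_ge_imp_span_subset[OF \<open>finite C\<close>])
  then show "span B \<subseteq> f ` span B"
    by (simp add: f.span_image span_C)
qed (rule into)

lemma in_span_pairE:
  assumes "s \<in> span {u, v}"
  obtains a b where "s = a *s u + b *s v"
  using assms by (auto simp: span_insert span_singleton) (metis diff_add_cancel add.commute)

lemma dim_2_eq_span_pair:
  assumes "subspace V" "dim V = 2" "u \<in> V" "v \<in> V" "u \<noteq> 0" "v \<notin> span {u}"
  shows "V = span {u, v}"
proof
  obtain B where B: "B \<subseteq> V" "independent B" "V \<subseteq> span B" "card B = dim V"
    by (rule basis_exists)
  have "card B = 2" using B(4) assms(2) by simp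
  then have "finite B" by (intro card_ge_0_finite) simp
  have "u \<noteq> v" using assms(6) span_base[of u "{u}"] by auto
  have "independent {u}" using assms(5) by (simp add: independent_insert)
  then have "independent {v, u}" using assms(6) \<open>u \<noteq> v\<close> by (simp add: independent_insert)
  then have "independent {u, v}" by (simp add: insert_commute)
  moreover have "{u, v} \<subseteq> span B" using assms(3,4) B(3) by blast
  moreover have "card B \<le> card {u, v}" using \<open>card B = 2\<close> \<open>u \<noteq> v\<close> by simp
  ultimately have "span B \<subseteq> span {u, v}"
    by (rule independent_card_ge_imp_span_subset[OF \<open>finite B\<close>])
  with B(3) show "V \<subseteq> span {u, v}" by (rule subset_trans)
  show "span {u, v} \<subseteq> V" using assms(1,3,4) by (simp add: span_minimal)
qed

lemma dim_2_not_subset_span_singleton: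
  assumes "dim V = 2"
  shows "\<not> V \<subseteq> span {k}"
  using dim_le_card[of V "{k}"] assms by auto

lemma dim_2_obtain_span_pair:
  assumes "subspace V" "dim V = 2"
  obtains u v where "V = span {u, v}"
proof -
  obtain u where "u \<in> V" "u \<notin> span {0}"
    using dim_2_not_subset_span_singleton[OF assms(2)] by blast
  then have "u \<noteq> 0" by (metis span_zero)
  obtain v where "v \<in> V" "v \<notin> span {u}"
    using dim_2_not_subset_span_singleton[OF assms(2)] by blast
  show thesis
    using that dim_2_eq_span_pair[OF assms \<open>u \<in> V\<close> \<open>v \<in> V\<close> \<open>u \<noteq> 0\<close> \<open>v \<notin> span {u}\<close>] .
qed

lemma triangular_inj_on_span_pair:
  assumes "Vector_Spaces.linear scale scale f"
    and "f u \<in> span {u}" "f u \<noteq> 0" "f v \<notin> span {u}"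
  shows "inj_on f (span {u, v})"
proof -
  interpret f: Vector_Spaces.linear scale scale f by fact
  have "s = 0" if "s \<in> span {u, v}" "f s = 0" for s
  proof -
    obtain a b where s: "s = a *s u + b *s v" using \<open>s \<in> span {u, v}\<close> by (rule in_span_pairE)
    have sum0: "a *s f u + b *s f v = 0"
      using \<open>f s = 0\<close> by (simp add: s f.add f.scale)
    have "b = 0"
    proof (rule ccontr)
      assume "b \<noteq> 0"
      have "b *s f v = - (a *s f u)" using sum0 by (simp add: eq_neg_iff_add_eq_0 add.commute)
      then have "b *s f v \<in> span {u}" using assms(2) by (simp add: span_neg span_scale)
      then have "f v \<in> span {u}" using \<open>b \<noteq> 0\<close> span_scale[of "b *s f v" _ "inverse b"] by simp
      then show False using assms(4) by blast
    qed
    then show "s = 0" using sum0 assms(3) s by simp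
  qed
  then show ?thesis using f.inj_on_iff_eq_0[OF subspace_span] by blast
qed

end

locale complex_lie_algebra = vector_space scale
  for scale :: "complex \<Rightarrow> 'a::ab_group_add \<Rightarrow> 'a" (infixr "*s" 75) +
  fixes br :: "'a \<Rightarrow> 'a \<Rightarrow> 'a"
  assumes bracket_add_left: "br (x + y) z = br x z + br y z"
    and bracket_add_right: "br x (y + z) = br x y + br x z"
    and bracket_scale_left: "br (c *s x) y = c *s br x y"
    and bracket_scale_right: "br x (c *s y) = c *s br x y"
    and bracket_self: "br x x = 0"
    and jacobi: "br x (br y z) + br y (br z x) + br z (br x y) = 0"

lemma complex_lie_algebra_iff: "complex_lie_algebra sc br \<longleftrightarrow> lie_algebra sc br"
  unfolding complex_lie_algebra_def complex_lie_algebra_axioms_def lie_algebra_def by blast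

context complex_lie_algebra
begin

abbreviation D where "D \<equiv> derived_algebra scale br"

lemma linear_bracket: "Vector_Spaces.linear scale scale (br x)"
  by (simp add: Vector_Spaces.linear_def module_hom_iff vector_space_axioms module_axioms
      bracket_add_right bracket_scale_right)

lemma bracket_zero_left [simp]: "br 0 x = 0"
  by (metis bracket_add_left add_cancel_right_right)

lemma bracket_zero_right [simp]: "br x 0 = 0"
  by (metis bracket_add_right add_cancel_right_right)

lemma bracket_antisym: "br y x = - br x y"
proof -
  have "br x x + br y x + (br x y + br y y) = 0"
    using bracket_self[of "x + y"] by (simp only: bracket_add_left bracket_add_right)
  then have "br x y + br y x = 0" by (simp add: bracket_self add.commute)
  then show ?thesis by (simp add: eq_neg_iff_add_eq_0 add.commute)
qed

lemma bracket_diff_right: "br x (y - z) = br x y - br x z"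
  by (metis bracket_add_right eq_diff_eq)

lemma bracket_leibniz: "br y (br a b) = br (br y a) b + br a (br y b)"
proof -
  have "br y (br a b) = - (br a (br b y) + br b (br y a))"
    using jacobi[of y a b] by (metis add.assoc eq_neg_iff_add_eq_0)
  also have "\<dots> = br a (br y b) + br (br y a) b"
    using bracket_antisym[of b y] bracket_antisym[of "br y a" b]
    by (metis bracket_diff_right diff_0 bracket_zero_right minus_add_distrib minus_minus)
  finally show ?thesis by (simp add: add.commute)
qed

lemma subspace_derived: "subspace D"
  by (simp add: derived_algebra_def)

lemma bracket_mem_derived: "br x y \<in> D"
  unfolding derived_algebra_def by (rule span_base) blast

lemma bracket_mem_span_pair:
  assumes "s \<in> span {u, v}" "t \<in> span {u, v}"
  shows "br s t \<in> span {br u v}"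
proof -
  obtain a b where s: "s = a *s u + b *s v" using assms(1) by (rule in_span_pairE)
  obtain a' b' where t: "t = a' *s u + b' *s v" using assms(2) by (rule in_span_pairE)
  have "br s t = (a * b' - b * a') *s br u v"
    unfolding s t
    by (simp add: bracket_add_left bracket_add_right bracket_scale_left bracket_scale_right
        bracket_self bracket_antisym[of v u] scale_left_diff_distrib mult.commute)
  then show ?thesis by (simp add: span_base span_scale)
qed

lemma ad_kernel_abelian_complement:
  assumes "finite B" "D = span B" and inj: "inj_on (br x) D"
  defines "A \<equiv> {a. br x a = 0}"
  shows "subspace A" "\<forall>a\<in>A. \<forall>b\<in>A. br a b = 0" "A \<inter> D = {0}"
    "{a + d | a d. a \<in> A \<and> d \<in> D} = UNIV"
proof -
  interpret ad: Vector_Spaces.linear scale scale "br x" by (rule linear_bracket)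
  show "subspace A" unfolding A_def by (rule ad.subspace_kernel)
  have zero: "s = 0" if "s \<in> D" "br x s = 0" for s
    using inj that ad.inj_on_iff_eq_0[OF subspace_derived] by blast
  show "\<forall>a\<in>A. \<forall>b\<in>A. br a b = 0"
    unfolding A_def by (auto intro: zero bracket_mem_derived simp: bracket_leibniz)
  show "A \<inter> D = {0}" unfolding A_def using zero subspace_derived subspace_0 by auto
  have "br x ` span B \<subseteq> span B" using bracket_mem_derived assms(2) by auto
  then have onto: "br x ` D = D"
    using linear_inj_on_imp_image_span_eq[OF linear_bracket \<open>finite B\<close>] assms(2) inj by simp
  show "{a + d | a d. a \<in> A \<and> d \<in> D} = UNIV"
  proof (intro set_eqI iffI)
    fix y
    obtain d where "d \<in> D" "br x d = br x y"
      using onto bracket_mem_derived by (metis imageE)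
    then have "y - d \<in> A" unfolding A_def by (simp add: bracket_diff_right)
    then show "y \<in> {a + d | a d. a \<in> A \<and> d \<in> D}"
      using \<open>d \<in> D\<close> by (metis (mono_tags, lifting) diff_add_cancel mem_Collect_eq)
  qed simp
qed

end

locale lie_algebra_derived_dim_2 = complex_lie_algebra +
  assumes dim_derived: "dim (derived_algebra scale br) = 2"
    and dim_lcs_2: "dim (lcs scale br 2) = 2"
begin

lemma brackets_with_derived_not_in_line: "\<not> (\<forall>z. \<forall>s\<in>D. br z s \<in> span {k})"
proof
  assume "\<forall>z. \<forall>s\<in>D. br z s \<in> span {k}"
  then have "{br x y | x y. y \<in> D} \<subseteq> span {k}" by blast
  moreover have "lcs scale br 2 = span {br x y | x y. y \<in> D}"
    by (simp add: numeral_2_eq_2 derived_algebra_def)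
  ultimately have "lcs scale br 2 \<subseteq> span {k}" by (simp add: span_minimal)
  then show False using dim_2_not_subset_span_singleton[OF dim_lcs_2] by blast
qed

lemma brackets_with_spanning_pair_not_in_line:
  assumes "D \<subseteq> span {u, v}"
  obtains z where "br z u \<notin> span {k} \<or> br z v \<notin> span {k}"
proof (rule ccontr)
  assume "\<not> thesis"
  then have uv: "br z u \<in> span {k}" "br z v \<in> span {k}" for z using that by blast+
  have "br z s \<in> span {k}" if "s \<in> D" for z s
  proof -
    obtain a b where "s = a *s u + b *s v" using assms \<open>s \<in> D\<close> by (blast elim: in_span_pairE)
    then show ?thesis
      using uv by (simp add: bracket_add_right bracket_scale_right span_add span_scale)
  qed
  then show False using brackets_with_derived_not_in_line by blast
qed

lemma bracket_spanning_derived_brackets_eq_0: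
  assumes "e1 \<in> D" "e2 \<in> D"
    and DD: "\<And>s t. s \<in> D \<Longrightarrow> t \<in> D \<Longrightarrow> br s t \<in> span {br e1 e2}"
  shows "br e1 e2 = 0"
proof (rule ccontr)
  define c where "c = br e1 e2"
  assume "br e1 e2 \<noteq> 0"
  then have "c \<noteq> 0" "c \<in> D" by (simp_all add: c_def bracket_mem_derived)
  obtain w where "w \<in> D" "w \<notin> span {c}"
    using dim_2_not_subset_span_singleton[OF dim_derived] by blast
  then have D_cw: "D = span {c, w}"
    using dim_2_eq_span_pair[OF subspace_derived dim_derived \<open>c \<in> D\<close>] \<open>c \<noteq> 0\<close> by blast
  obtain \<rho> where \<rho>: "br w c = \<rho> *s c"
    using DD[OF \<open>w \<in> D\<close> \<open>c \<in> D\<close>] by (auto simp: c_def span_singleton)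
  have "\<rho> \<noteq> 0"
  proof
    assume "\<rho> = 0"
    then have "br c w = 0" using \<rho> bracket_antisym[of c w] by simp
    moreover have "c \<in> span {br c w}"
      using bracket_mem_span_pair[of e1 c w e2] assms(1,2) D_cw c_def by simp
    ultimately show False using \<open>c \<noteq> 0\<close> by simp
  qed
  have ad_c: "br y c \<in> span {c}" for y
  proof -
    have "br y c = br (br y e1) e2 + br e1 (br y e2)" unfolding c_def by (rule bracket_leibniz)
    then show ?thesis
      using DD[OF bracket_mem_derived \<open>e2 \<in> D\<close>] DD[OF \<open>e1 \<in> D\<close> bracket_mem_derived]
      by (simp add: c_def span_add)
  qed
  have ad_w: "br y w \<in> span {c}" for y
  proof -
    obtain p where p: "br y c = p *s c" using ad_c by (auto simp: span_singleton)
    obtain \<gamma> \<delta> where w: "br y w = \<gamma> *s c + \<delta> *s w"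
      using D_cw bracket_mem_derived by (metis in_span_pairE)
    have "br y (br w c) = br (br y w) c + br w (br y c)" by (rule bracket_leibniz)
    then have "(\<rho> * p) *s c = (\<delta> * \<rho>) *s c + (p * \<rho>) *s c"
      by (simp add: \<rho> p w bracket_add_left bracket_scale_left bracket_scale_right bracket_self)
    then have "(\<delta> * \<rho>) *s c = 0" by (simp add: mult.commute)
    then have "\<delta> = 0" using \<open>c \<noteq> 0\<close> \<open>\<rho> \<noteq> 0\<close> by simp
    then show ?thesis using w by (simp add: span_base span_scale)
  qed
  show False
    using brackets_with_spanning_pair_not_in_line[of c w c] D_cw ad_c ad_w by blast
qed

lemma derived_abelian:
  assumes "s \<in> D" "t \<in> D"
  shows "br s t = 0"
proof -
  obtain e1 e2 where D_e: "D = span {e1, e2}"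
    by (rule dim_2_obtain_span_pair[OF subspace_derived dim_derived])
  then have DD: "br s t \<in> span {br e1 e2}" if "s \<in> D" "t \<in> D" for s t
    using bracket_mem_span_pair that by simp
  have "br e1 e2 = 0"
    using D_e by (intro bracket_spanning_derived_brackets_eq_0 DD) (simp_all add: span_base)
  then show ?thesis using DD[OF assms] by simp
qed

lemma bracket_commute_on_derived:
  assumes "s \<in> D"
  shows "br z (br y s) = br y (br z s)"
  using bracket_leibniz[of z y s] derived_abelian[OF bracket_mem_derived assms] by simp

lemma bracket_kernel_line_invariant:
  assumes D_kw: "D = span {k, w}" and "br y k = 0" "br y w \<noteq> 0"
  shows "br z k \<in> span {k}"
proof -
  obtain a b where ab: "br z k = a *s k + b *s w"
    using D_kw bracket_mem_derived by (metis in_span_pairE)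
  have "k \<in> D" using D_kw by (simp add: span_base)
  then have "br y (br z k) = 0"
    using bracket_commute_on_derived \<open>br y k = 0\<close> by (metis bracket_zero_right)
  then have "b *s br y w = 0"
    using \<open>br y k = 0\<close> ab by (simp add: bracket_add_right bracket_scale_right)
  then show ?thesis using \<open>br y w \<noteq> 0\<close> ab by (simp add: span_base span_scale)
qed

lemma derived_inter_center: "D \<inter> lie_center br = {0}"
proof -
  have "k = 0" if "k \<in> D" and central: "\<forall>x. br k x = 0" for k
  proof (rule ccontr)
    assume "k \<noteq> 0"
    have ad_k: "br z k = 0" for z using central bracket_antisym[of k z] by simp
    obtain w where "w \<in> D" "w \<notin> span {k}"
      using dim_2_not_subset_span_singleton[OF dim_derived] by blast
    then have D_kw: "D = span {k, w}"
      using dim_2_eq_span_pair[OF subspace_derived dim_derived \<open>k \<in> D\<close>] \<open>k \<noteq> 0\<close> by blast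
    obtain z0 where "br z0 w \<notin> span {k}"
      using brackets_with_spanning_pair_not_in_line[of k w k] D_kw ad_k span_zero by auto
    define v where "v = br z0 w"
    have D_kv: "D = span {k, v}"
      using dim_2_eq_span_pair[OF subspace_derived dim_derived \<open>k \<in> D\<close>] \<open>k \<noteq> 0\<close>
        \<open>br z0 w \<notin> span {k}\<close> bracket_mem_derived v_def by blast
    have "br z v \<in> span {v}" for z
    proof -
      obtain a b where ab: "br z w = a *s k + b *s w"
        using D_kw bracket_mem_derived by (metis in_span_pairE)
      have "br z v = br z0 (br z w)"
        unfolding v_def using bracket_commute_on_derived[OF \<open>w \<in> D\<close>] by simp
      also have "\<dots> = b *s v"
        by (simp add: ab v_def ad_k bracket_add_right bracket_scale_right)
      finally show ?thesis by (simp add: span_base span_scale)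
    qed
    then show False
      using brackets_with_spanning_pair_not_in_line[of k v v] D_kv ad_k span_zero by auto
  qed
  then show ?thesis using subspace_derived subspace_0 by (auto simp: lie_center_def)
qed

lemma exists_bracket_inj_on_derived: "\<exists>x. inj_on (br x) D"
proof (rule ccontr)
  assume no_inj: "\<nexists>x. inj_on (br x) D"
  have singular: "\<exists>k\<in>D. k \<noteq> 0 \<and> br y k = 0" for y
  proof -
    interpret ad: Vector_Spaces.linear scale scale "br y" by (rule linear_bracket)
    show ?thesis using no_inj ad.inj_on_iff_eq_0[OF subspace_derived] by blast
  qed
  obtain y w where "w \<in> D" "br y w \<noteq> 0"
    using brackets_with_derived_not_in_line[of 0] by auto
  obtain k where "k \<in> D" "k \<noteq> 0" "br y k = 0" using singular by blast
  have "w \<notin> span {k}"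
    using \<open>br y k = 0\<close> \<open>br y w \<noteq> 0\<close> by (auto simp: span_singleton bracket_scale_right)
  then have D_kw: "D = span {k, w}"
    using dim_2_eq_span_pair[OF subspace_derived dim_derived \<open>k \<in> D\<close> \<open>w \<in> D\<close> \<open>k \<noteq> 0\<close>] by blast
  have k_eigen: "br z k \<in> span {k}" for z
    using bracket_kernel_line_invariant[OF D_kw \<open>br y k = 0\<close> \<open>br y w \<noteq> 0\<close>] .
  have inj: "inj_on (br x) D" if "br x k \<noteq> 0" "br x w \<notin> span {k}" for x
    using triangular_inj_on_span_pair[OF linear_bracket k_eigen that] D_kw by simp
  obtain z1 where z1: "br z1 w \<notin> span {k}"
    using brackets_with_spanning_pair_not_in_line[of k w k] D_kw k_eigen by blast
  obtain z2 where "br k z2 \<noteq> 0"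
    using derived_inter_center \<open>k \<in> D\<close> \<open>k \<noteq> 0\<close> by (auto simp: lie_center_def)
  then have z2: "br z2 k \<noteq> 0" using bracket_antisym[of z2 k] by simp
  \<comment> \<open>a vector space is not the union of two proper subspaces\<close>
  show False
  proof (cases "br z1 k = 0 \<and> br z2 w \<in> span {k}")
    case True
    then have "br (z1 + z2) k \<noteq> 0" "br (z1 + z2) w \<notin> span {k}"
      using z1 z2 span_add_eq2 by (auto simp: bracket_add_left)
    then show False using inj no_inj by blast
  next
    case False
    then show False using inj no_inj z1 z2 by blast
  qed
qed

end

theorem proposition3p8:
  fixes sc :: "complex \<Rightarrow> 'a::ab_group_add \<Rightarrow> 'a" and br :: "'a \<Rightarrow> 'a \<Rightarrow> 'a"
  assumes "lie_algebra sc br"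
    and "finite_dim_lie sc"
    and "lie_pure sc br"
    and "\<not> lie_nilpotent sc br"
    and "lie_solvable sc br"
    and "lie_breadth sc br = 2"
    and "vector_space.dim sc (derived_algebra sc br) = 2"
    and "\<forall>k\<ge>2. vector_space.dim sc (lcs sc br k) = 2"
  shows "\<exists>A. module.subspace sc A
           \<and> (\<forall>x\<in>A. \<forall>y\<in>A. br x y = 0)
           \<and> A \<inter> derived_algebra sc br = {0}
           \<and> {a + d | a d. a \<in> A \<and> d \<in> derived_algebra sc br} = UNIV"
proof -
  interpret lie_algebra_derived_dim_2 sc br
    using assms(1,7,8)
    by (simp add: lie_algebra_derived_dim_2_def lie_algebra_derived_dim_2_axioms_def
        complex_lie_algebra_iff)
  obtain x where inj: "inj_on (br x) (derived_algebra sc br)"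
    using exists_bracket_inj_on_derived by blast
  obtain u v where D_uv: "derived_algebra sc br = span {u, v}"
    by (rule dim_2_obtain_span_pair[OF subspace_derived dim_derived])
  have "finite {u, v}" by simp
  from ad_kernel_abelian_complement[OF this D_uv inj] show ?thesis
    by (intro exI[of _ "{a. br x a = 0}"] conjI)
qed

end
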